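(* Let $h\in\mathcal H$, $k_0=k_0(h)$, $k_f=k_f(h)$. Then $$k_0\le \operatorname{hdepth}(h)\le \min\{k_f,\ k_0+c(h)\}.$$
   Context: $\mathcal H$ denotes the set of nonzero functions $h:\mathbb Z\to\mathbb Z_{\ge 0}$ such that $h(j)=0$ for all sufficiently negative $j$. For $h\in\mathcal H$ and integers $k\le d$, set $\beta_k^d(h)=\sum_{j\le k}(-1)^{k-j}\binom{d-j}{k-j}h(j)$, and $\operatorname{hdepth}(h)=\max\{d\in\mathbb Z:\ \beta_k^d(h)\ge 0\text{ for all integers }k\le d\}$. Further $k_0(h)=\min\{j: h(j)>0\}$; $k_f(h)=\min\{j\ge k_0(h): h(j+1)=0\}$, with $k_f(h)=+\infty$ if no such $j$ exists; and $c(h)=\left\lfloor h(k_0(h)+1)/h(k_0(h))\right\rfloor$. *)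

theory Defs
  imports Complex_Main "HOL-Library.Extended_Real"
begin

definition inH :: "(int \<Rightarrow> nat) \<Rightarrow> bool" where
  "inH h \<longleftrightarrow> h \<noteq> (\<lambda>_. 0) \<and> (\<exists>N. \<forall>j\<le>N. h j = 0)"

text \<open>beta_k^d(h) = sum_{j<=k} (-1)^(k-j) binom(d-j,k-j) h(j); only finitely many terms are
  nonzero for h in H, so we sum over the (finite) set of such indices.\<close>
definition beta :: "int \<Rightarrow> int \<Rightarrow> (int \<Rightarrow> nat) \<Rightarrow> int" where
  "beta k d h = (\<Sum>j\<in>{j. j \<le> k \<and> h j \<noteq> 0}.
      (-1) ^ nat (k - j) * int (nat (d - j) choose nat (k - j)) * int (h j))"

definition hdepth :: "(int \<Rightarrow> nat) \<Rightarrow> int" where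
  "hdepth h = (GREATEST d. \<forall>k. k \<le> d \<longrightarrow> beta k d h \<ge> 0)"

definition k0 :: "(int \<Rightarrow> nat) \<Rightarrow> int" where
  "k0 h = (LEAST j. h j > 0)"

definition kf :: "(int \<Rightarrow> nat) \<Rightarrow> ereal" where
  "kf h = (if \<exists>j\<ge>k0 h. h (j + 1) = 0
           then ereal (of_int (LEAST j. j \<ge> k0 h \<and> h (j + 1) = 0))
           else \<infinity>)"

definition cH :: "(int \<Rightarrow> nat) \<Rightarrow> int" where
  "cH h = \<lfloor>real (h (k0 h + 1)) / real (h (k0 h))\<rfloor>"

end

theory Submission
  imports Defs
begin

text \<open>
  Pascal's rule gives beta_k^d = beta_k^(d-1) - beta_(k-1)^(d-1), so by induction on k
  (starting below k_0, where every beta vanishes) nonnegativity of all beta_k^d implies that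
  of all beta_k^(d-1): the admissible depths form a down-set and hdepth is its maximum.
  Depth k_0 is admissible, since there only beta_(k_0)^(k_0) = h(k_0) is nonzero.
  For d > k_0 one has beta_(k_0+1)^d = h(k_0+1) - (d - k_0) h(k_0), which forces d \<le> k_0 + c(h).
  Finally, if h(f+1) = 0 with f \<ge> k_0 and depth f+1 were admissible, Pascal's rule would make
  beta_k^f increasing in k on [k_0, f+1], so beta_(f+1)^f \<ge> h(k_0) > 0; but every binomial in
  beta_(f+1)^f vanishes except the one multiplying h(f+1) = 0.
\<close>

lemma Least_int_bounded_below:
  fixes P :: "int \<Rightarrow> bool"
  assumes "P x" and bound: "\<And>y. P y \<Longrightarrow> b \<le> y"
  shows "P (Least P)" and "\<And>y. P y \<Longrightarrow> Least P \<le> y"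
proof -
  define S where "S = {y. P y} \<inter> {b..x}"
  have fin: "finite S" and "x \<in> S"
    using assms by (auto simp: S_def)
  then have "Min S \<in> S" and "Min S \<le> x"
    using Min_in[OF fin] Min_le[OF fin] by blast+
  then have "P (Min S)" and "Min S \<le> x"
    by (auto simp: S_def)
  moreover have "Min S \<le> y" if "P y" for y
    using Min_le[OF fin, of y] that bound[OF that] \<open>Min S \<le> x\<close> by (cases "y \<le> x") (auto simp: S_def)
  ultimately have "Least P = Min S"
    by (intro Least_equality) auto
  with \<open>P (Min S)\<close> \<open>\<And>y. P y \<Longrightarrow> Min S \<le> y\<close>
  show "P (Least P)" and "\<And>y. P y \<Longrightarrow> Least P \<le> y"
    by auto
qed

lemma Greatest_int_bounded_above:
  fixes P :: "int \<Rightarrow> bool"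
  assumes "P x" and bound: "\<And>y. P y \<Longrightarrow> y \<le> b"
  shows "P (Greatest P)" and "\<And>y. P y \<Longrightarrow> y \<le> Greatest P"
proof -
  define S where "S = {y. P y} \<inter> {x..b}"
  have fin: "finite S" and "x \<in> S"
    using assms by (auto simp: S_def)
  then have "Max S \<in> S" and "x \<le> Max S"
    using Max_in[OF fin] Max_ge[OF fin] by blast+
  then have "P (Max S)" and "x \<le> Max S"
    by (auto simp: S_def)
  moreover have "y \<le> Max S" if "P y" for y
    using Max_ge[OF fin, of y] that bound[OF that] \<open>x \<le> Max S\<close> by (cases "x \<le> y") (auto simp: S_def)
  ultimately have "Greatest P = Max S"
    by (intro Greatest_equality) auto
  with \<open>P (Max S)\<close> \<open>\<And>y. P y \<Longrightarrow> y \<le> Max S\<close>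
  show "P (Greatest P)" and "\<And>y. P y \<Longrightarrow> y \<le> Greatest P"
    by auto
qed

lemma
  assumes "inH h"
  shows k0_pos: "h (k0 h) > 0" and k0_le: "h j > 0 \<Longrightarrow> k0 h \<le> j"
proof -
  from assms obtain N x where N: "\<forall>j\<le>N. h j = 0" and "h x > 0"
    unfolding inH_def by fastforce
  moreover have "\<And>y. h y > 0 \<Longrightarrow> N + 1 \<le> y"
    by (rule ccontr) (use N in auto)
  ultimately show "h (k0 h) > 0" and "h j > 0 \<Longrightarrow> k0 h \<le> j"
    unfolding k0_def using Least_int_bounded_below[of "\<lambda>j. h j > 0" x "N + 1"] by blast+
qed

definition beta_term :: "(int \<Rightarrow> nat) \<Rightarrow> int \<Rightarrow> int \<Rightarrow> int \<Rightarrow> int" where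
  "beta_term h d k j = (-1) ^ nat (k - j) * int (nat (d - j) choose nat (k - j)) * int (h j)"

lemma beta_eq_sum_from_k0:
  assumes "inH h"
  shows "beta k d h = (\<Sum>j\<in>{k0 h..k}. beta_term h d k j)"
proof -
  have "(\<Sum>j\<in>{k0 h..k}. beta_term h d k j) = (\<Sum>j\<in>{j\<in>{k0 h..k}. h j \<noteq> 0}. beta_term h d k j)"
    by (rule sum.mono_neutral_right) (auto simp: beta_term_def)
  also have "{j\<in>{k0 h..k}. h j \<noteq> 0} = {j. j \<le> k \<and> h j \<noteq> 0}"
    using k0_le[OF assms] by auto
  finally show ?thesis
    unfolding beta_def beta_term_def by simp
qed

lemma beta_below_k0: "inH h \<Longrightarrow> k < k0 h \<Longrightarrow> beta k d h = 0"
  by (simp add: beta_eq_sum_from_k0)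

lemma beta_term_pascal:
  assumes "j < k" and "k \<le> d"
  shows "beta_term h d k j = beta_term h (d - 1) k j - beta_term h (d - 1) (k - 1) j"
proof -
  define n where "n = nat (d - j)"
  define r where "r = nat (k - j)"
  have pos: "n > 0" "r > 0"
    using assms by (auto simp: n_def r_def)
  have shift: "nat (d - 1 - j) = n - 1" "nat (k - 1 - j) = r - 1"
    by (auto simp: n_def r_def)
  have sign: "(-1::int) ^ r = - ((-1) ^ (r - 1))"
    using pos by (cases r) auto
  have "beta_term h d k j = (-1) ^ r * int ((n - 1 choose (r - 1)) + (n - 1 choose r)) * int (h j)"
    unfolding beta_term_def n_def[symmetric] r_def[symmetric] using choose_reduce_nat[OF pos] by simp
  also have "\<dots> = (-1) ^ r * int (n - 1 choose r) * int (h j)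
                  - (-1) ^ (r - 1) * int (n - 1 choose (r - 1)) * int (h j)"
    using sign by (simp add: algebra_simps)
  also have "\<dots> = beta_term h (d - 1) k j - beta_term h (d - 1) (k - 1) j"
    unfolding beta_term_def shift r_def[symmetric] n_def[symmetric] by simp
  finally show ?thesis .
qed

lemma beta_pascal:
  assumes H: "inH h" and "k \<le> d"
  shows "beta k d h = beta k (d - 1) h - beta (k - 1) (d - 1) h"
proof (cases "k < k0 h")
  case True
  then show ?thesis using H by (simp add: beta_below_k0)
next
  case False
  then have split: "{k0 h..k} = insert k {k0 h..k - 1}" by auto
  have top: "beta_term h d k k = beta_term h (d - 1) k k"
    by (simp add: beta_term_def)
  have "(\<Sum>j\<in>{k0 h..k - 1}. beta_term h d k j)
        = (\<Sum>j\<in>{k0 h..k - 1}. beta_term h (d - 1) k j) - beta (k - 1) (d - 1) h"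
    using H assms(2) by (simp add: beta_eq_sum_from_k0 beta_term_pascal sum_subtractf)
  with top show ?thesis
    using H by (simp add: beta_eq_sum_from_k0 split)
qed

definition beta_nonneg :: "(int \<Rightarrow> nat) \<Rightarrow> int \<Rightarrow> bool" where
  "beta_nonneg h d \<longleftrightarrow> (\<forall>k\<le>d. beta k d h \<ge> 0)"

lemma beta_nonneg_pred:
  assumes H: "inH h" and d: "beta_nonneg h d"
  shows "beta_nonneg h (d - 1)"
  unfolding beta_nonneg_def
proof (intro allI impI)
  fix k assume "k \<le> d - 1"
  show "beta k (d - 1) h \<ge> 0"
  proof (cases "k < k0 h")
    case True
    then show ?thesis using H by (simp add: beta_below_k0)
  next
    case False
    then have "k0 h - 1 \<le> k" by simp
    then show ?thesis using \<open>k \<le> d - 1\<close>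
    proof (induction k rule: int_ge_induct)
      case base
      then show ?case using H by (simp add: beta_below_k0)
    next
      case (step i)
      have "beta (i + 1) (d - 1) h = beta (i + 1) d h + beta i (d - 1) h"
        using beta_pascal[OF H, of "i + 1" d] step.prems by simp
      moreover have "beta (i + 1) d h \<ge> 0"
        using d step.prems unfolding beta_nonneg_def by simp
      ultimately show ?case using step by simp
    qed
  qed
qed

lemma beta_nonneg_mono:
  assumes "inH h" and "beta_nonneg h d" and "d' \<le> d"
  shows "beta_nonneg h d'"
  using assms(3)
  by (induction d' rule: int_le_induct) (use assms beta_nonneg_pred in auto)

lemma beta_nonneg_k0:
  assumes "inH h"
  shows "beta_nonneg h (k0 h)"
  unfolding beta_nonneg_def
proof (intro allI impI)
  fix k assume "k \<le> k0 h"
  then consider "k < k0 h" | "k = k0 h" by linarith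
  then show "beta k (k0 h) h \<ge> 0"
    by cases (use assms in \<open>auto simp: beta_below_k0 beta_eq_sum_from_k0 beta_term_def\<close>)
qed

lemma beta_k0_succ:
  assumes "inH h" and "k0 h < d"
  shows "beta (k0 h + 1) d h = int (h (k0 h + 1)) - (d - k0 h) * int (h (k0 h))"
proof -
  have "{k0 h..k0 h + 1} = {k0 h, k0 h + 1}" by auto
  then have "beta (k0 h + 1) d h = beta_term h d (k0 h + 1) (k0 h) + beta_term h d (k0 h + 1) (k0 h + 1)"
    using assms(1) by (simp add: beta_eq_sum_from_k0)
  also have "\<dots> = int (h (k0 h + 1)) - (d - k0 h) * int (h (k0 h))"
    using assms(2) by (simp add: beta_term_def algebra_simps)
  finally show ?thesis .
qed

lemma beta_nonneg_le_k0_plus_cH: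
  assumes H: "inH h" and d: "beta_nonneg h d"
  shows "d \<le> k0 h + cH h"
proof (cases "d \<le> k0 h")
  case True
  moreover have "cH h \<ge> 0" unfolding cH_def by simp
  ultimately show ?thesis by simp
next
  case False
  have "beta (k0 h + 1) d h \<ge> 0"
    using d False unfolding beta_nonneg_def by simp
  then have "(d - k0 h) * int (h (k0 h)) \<le> int (h (k0 h + 1))"
    using beta_k0_succ[OF H] False by simp
  then have "real_of_int (d - k0 h) * real (h (k0 h)) \<le> real (h (k0 h + 1))"
    by (metis of_int_le_iff of_int_mult of_int_of_nat_eq)
  then have "real_of_int (d - k0 h) \<le> real (h (k0 h + 1)) / real (h (k0 h))"
    using k0_pos[OF H] by (simp add: pos_le_divide_eq)
  then have "d - k0 h \<le> cH h"
    unfolding cH_def by (simp only: le_floor_iff)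
  then show ?thesis by simp
qed

lemma beta_succ_self_eq_0:
  assumes "inH h" and "h (f + 1) = 0"
  shows "beta (f + 1) f h = 0"
  unfolding beta_eq_sum_from_k0[OF assms(1)]
proof (rule sum.neutral, intro ballI)
  fix j assume "j \<in> {k0 h..f + 1}"
  then consider "j \<le> f" | "j = f + 1" by fastforce
  then show "beta_term h f (f + 1) j = 0"
  proof cases
    case 1
    then have "nat (f - j) < nat (f + 1 - j)" by simp
    then show ?thesis by (simp add: beta_term_def binomial_eq_0)
  next
    case 2
    then show ?thesis using assms(2) by (simp add: beta_term_def)
  qed
qed

lemma beta_nonneg_le_zero_gap:
  assumes H: "inH h" and d: "beta_nonneg h d" and f: "k0 h \<le> f" "h (f + 1) = 0"
  shows "d \<le> f"
proof (rule ccontr)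
  assume "\<not> d \<le> f"
  then have succ: "beta_nonneg h (f + 1)"
    using beta_nonneg_mono[OF H d] by simp
  have ge: "beta k f h \<ge> int (h (k0 h))" if "k0 h \<le> k" "k \<le> f + 1" for k
    using that
  proof (induction k rule: int_ge_induct)
    case base
    then show ?case using H f by (simp add: beta_eq_sum_from_k0 beta_term_def)
  next
    case (step i)
    have "beta (i + 1) f h = beta (i + 1) (f + 1) h + beta i f h"
      using beta_pascal[OF H, of "i + 1" "f + 1"] step.prems by simp
    moreover have "beta (i + 1) (f + 1) h \<ge> 0"
      using succ step.prems unfolding beta_nonneg_def by simp
    ultimately show ?case using step by simp
  qed
  have "beta (f + 1) f h \<ge> int (h (k0 h))"
    using ge f by simp
  then show False
    using beta_succ_self_eq_0[OF H f(2)] k0_pos[OF H] by simp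
qed

lemma
  assumes "inH h"
  shows beta_nonneg_hdepth: "beta_nonneg h (hdepth h)"
    and beta_nonneg_le_hdepth: "beta_nonneg h d \<Longrightarrow> d \<le> hdepth h"
  using Greatest_int_bounded_above[of "beta_nonneg h" "k0 h" "k0 h + cH h"]
    beta_nonneg_k0 beta_nonneg_le_k0_plus_cH assms
  unfolding hdepth_def beta_nonneg_def[symmetric] by blast+

lemma hdepth_le_kf:
  assumes H: "inH h"
  shows "ereal (of_int (hdepth h)) \<le> kf h"
proof (cases "\<exists>j\<ge>k0 h. h (j + 1) = 0")
  case True
  then obtain x where "k0 h \<le> x" "h (x + 1) = 0" by blast
  then have "k0 h \<le> (LEAST j. k0 h \<le> j \<and> h (j + 1) = 0)"
    and "h ((LEAST j. k0 h \<le> j \<and> h (j + 1) = 0) + 1) = 0"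
    using Least_int_bounded_below(1)[of "\<lambda>j. k0 h \<le> j \<and> h (j + 1) = 0" x "k0 h"] by auto
  then have "hdepth h \<le> (LEAST j. k0 h \<le> j \<and> h (j + 1) = 0)"
    using beta_nonneg_le_zero_gap[OF H beta_nonneg_hdepth[OF H]] by blast
  with True show ?thesis
    unfolding kf_def by simp
next
  case False
  then show ?thesis
    unfolding kf_def by (simp only: if_False) simp
qed

theorem proposition1p5:
  fixes h :: "int \<Rightarrow> nat"
  assumes "inH h"
  shows "k0 h \<le> hdepth h \<and>
         ereal (of_int (hdepth h)) \<le> min (kf h) (ereal (of_int (k0 h + cH h)))"
  using beta_nonneg_le_hdepth[OF assms beta_nonneg_k0[OF assms]]
    beta_nonneg_le_k0_plus_cH[OF assms beta_nonneg_hdepth[OF assms]]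
    hdepth_le_kf[OF assms]
  by simp

end
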